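(* For $k\ge0$ let $B_k$ be the family of bar $k$-visibility graphs and $A_k$ the family of arc $k$-visibility graphs. Then $A_j\not\subseteq B_i$ for all $i,j\ge 0$.
   Context: A bar $k$-visibility representation is a finite collection of pairwise disjoint closed horizontal line segments (bars) in the plane; two bars are adjacent if there is a vertical segment with endpoints on the two bars intersecting at most $k$ other bars. An arc $k$-visibility representation is a finite collection of pairwise disjoint circular arcs centered at a common point $O$; two arcs are adjacent if there is a segment contained in a line through $O$ (possibly passing through $O$) with endpoints on the two arcs intersecting at most $k$ other arcs (an arc met twice by the radial line counted once). In each case the graph has one vertex per bar/arc and the stated adjacency. *)

theory Defs
  imports "HOL-Analysis.Analysis"
begin

definition bar_points :: "real \<times> real \<times> real \<Rightarrow> complex set" where
  "bar_points b = (case b of (l, r, y) \<Rightarrow> {Complex x y | x. l \<le> x \<and> x \<le> r})"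

definition valid_bar :: "real \<times> real \<times> real \<Rightarrow> bool" where
  "valid_bar b = (case b of (l, r, y) \<Rightarrow> l < r)"

(* An arc (rho, a, b) centred at the origin O = 0, with rho > 0, a < b < a + 2 pi:
   the set {rho * cis t | a <= t <= b}. *)
definition arc_points :: "real \<times> real \<times> real \<Rightarrow> complex set" where
  "arc_points c = (case c of (\<rho>, a, b) \<Rightarrow> {complex_of_real \<rho> * cis t | t. a \<le> t \<and> t \<le> b})"

definition valid_arc :: "real \<times> real \<times> real \<Rightarrow> bool" where
  "valid_arc c = (case c of (\<rho>, a, b) \<Rightarrow> 0 < \<rho> \<and> a < b \<and> b < a + 2 * pi)"

definition pairwise_disjoint_on :: "nat set \<Rightarrow> (nat \<Rightarrow> complex set) \<Rightarrow> bool" where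
  "pairwise_disjoint_on V S = (\<forall>u\<in>V. \<forall>v\<in>V. u \<noteq> v \<longrightarrow> S u \<inter> S v = {})"

definition other_hits :: "nat set \<Rightarrow> (nat \<Rightarrow> complex set) \<Rightarrow> nat \<Rightarrow> nat \<Rightarrow> complex \<Rightarrow> complex \<Rightarrow> nat" where
  "other_hits V S u v p q = card {w \<in> V - {u, v}. S w \<inter> closed_segment p q \<noteq> {}}"

definition bar_k_visible :: "nat \<Rightarrow> nat set \<Rightarrow> (nat \<Rightarrow> real \<times> real \<times> real) \<Rightarrow> nat \<Rightarrow> nat \<Rightarrow> bool" where
  "bar_k_visible k V B u v =
     (\<exists>p q. p \<in> bar_points (B u) \<and> q \<in> bar_points (B v) \<and> Re p = Re q \<and>
            other_hits V (\<lambda>w. bar_points (B w)) u v p q \<le> k)"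

(* arc k-visibility: segment on a line through O with endpoints on the two arcs meeting
   <= k other arcs (each arc counted once) *)
definition arc_k_visible :: "nat \<Rightarrow> nat set \<Rightarrow> (nat \<Rightarrow> real \<times> real \<times> real) \<Rightarrow> nat \<Rightarrow> nat \<Rightarrow> bool" where
  "arc_k_visible k V A u v =
     (\<exists>p q. p \<in> arc_points (A u) \<and> q \<in> arc_points (A v) \<and> collinear {0, p, q} \<and>
            other_hits V (\<lambda>w. arc_points (A w)) u v p q \<le> k)"

definition bar_k_vis_graph :: "nat \<Rightarrow> nat set \<Rightarrow> (nat \<Rightarrow> nat \<Rightarrow> bool) \<Rightarrow> bool" where
  "bar_k_vis_graph k V E =
     (finite V \<and> (\<exists>B. (\<forall>v\<in>V. valid_bar (B v)) \<and>
        pairwise_disjoint_on V (\<lambda>v. bar_points (B v)) \<and>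
        (\<forall>u v. E u v \<longleftrightarrow> u \<in> V \<and> v \<in> V \<and> u \<noteq> v \<and> bar_k_visible k V B u v)))"

definition arc_k_vis_graph :: "nat \<Rightarrow> nat set \<Rightarrow> (nat \<Rightarrow> nat \<Rightarrow> bool) \<Rightarrow> bool" where
  "arc_k_vis_graph k V E =
     (finite V \<and> (\<exists>A. (\<forall>v\<in>V. valid_arc (A v)) \<and>
        pairwise_disjoint_on V (\<lambda>v. arc_points (A v)) \<and>
        (\<forall>u v. E u v \<longleftrightarrow> u \<in> V \<and> v \<in> V \<and> u \<noteq> v \<and> arc_k_visible k V A u v)))"

end

theory Submission
  imports Defs
begin

text \<open>
  For \<open>i = 0\<close> the witness is \<open>K\<^sub>5\<close>. Sort five pairwise 0-visible bars by height: the lines of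
  sight between them force the spans of the three middle bars into a pattern that no three
  intervals of the line can realise. On the other hand, five arcs around \<open>O\<close> can be placed so
  that every pair is joined by an unobstructed segment on a line through \<open>O\<close>.

  For \<open>i \<ge> 1\<close> the witness is the 4-cycle. Where two non-adjacent bars overlap horizontally,
  both remaining bars must block them; applied to both diagonals this makes the spans of opposite
  bars disjoint, and four intervals cannot overlap cyclically with both diagonals disjoint. The
  4-cycle is realised by arcs whose non-adjacent pairs cover angular ranges that stay disjoint even
  modulo a half-turn, so they lie on no common line through \<open>O\<close>, whatever \<open>j\<close> is.
\<close>

section \<open>Arcs and lines through the centre\<close>

text \<open>Angles are measured in units of \<open>pi / 12\<close>: a full turn is 24, a half-turn 12.\<close>

definition ang :: "real \<Rightarrow> real" where
  "ang s = s * pi / 12"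

text \<open>A negative \<open>r\<close> puts \<open>ray_point r g\<close> on the opposite ray, at angle \<open>g + 12\<close>.\<close>

definition ray_point :: "real \<Rightarrow> real \<Rightarrow> complex" where
  "ray_point r g = complex_of_real r * cis (ang g)"

lemma ang_le_iff [simp]: "ang s \<le> ang t \<longleftrightarrow> s \<le> t"
  by (simp add: ang_def divide_le_cancel)

lemma arc_points_ang: "arc_points (\<rho>, ang a, ang b) = {ray_point \<rho> s | s. a \<le> s \<and> s \<le> b}"
proof -
  have "t = ang (t * 12 / pi)" for t
    by (simp add: ang_def)
  then show ?thesis
    unfolding arc_points_def ray_point_def by (auto, metis ang_le_iff)
qed

lemma cis_ang_eq_iff: "cis (ang s) = cis (ang t) \<longleftrightarrow> (\<exists>k::int. s = t + 24 * of_int k)"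
proof -
  have "cis (ang s) = cis (ang t) \<longleftrightarrow> (\<exists>k::int. ang s = ang t + 2 * pi * k)"
    by (auto simp: complex_eq_iff sin_cos_eq_iff[symmetric])
  also have "\<dots> \<longleftrightarrow> (\<exists>k::int. s * pi = (t + 24 * k) * pi)"
    by (simp add: ang_def field_simps)
  also have "\<dots> \<longleftrightarrow> (\<exists>k::int. s = t + 24 * of_int k)"
    by simp
  finally show ?thesis .
qed

lemma cis_ang_add_half_turn: "cis (ang (s + 12)) = - cis (ang s)"
proof -
  have "ang (s + 12) = ang s + pi"
    by (simp add: ang_def field_simps)
  then show ?thesis
    by (simp flip: cis_mult)
qed

lemma scaled_cis_eq_iff:
  assumes "0 < \<rho>"
  shows "complex_of_real r * cis x = complex_of_real \<rho> * cis y \<longleftrightarrow>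
           (r = \<rho> \<and> cis y = cis x) \<or> (r = -\<rho> \<and> cis y = - cis x)"
proof
  assume eq: "complex_of_real r * cis x = complex_of_real \<rho> * cis y"
  have "norm (complex_of_real r * cis x) = norm (complex_of_real \<rho> * cis y)"
    using eq by simp
  then have "\<bar>r\<bar> = \<rho>"
    using assms by (simp add: norm_mult)
  then consider "r = \<rho>" | "r = -\<rho>"
    by linarith
  then show "(r = \<rho> \<and> cis y = cis x) \<or> (r = -\<rho> \<and> cis y = - cis x)"
  proof cases
    case 1
    then show ?thesis
      using eq assms by simp
  next
    case 2
    then have "complex_of_real \<rho> * (- cis x) = complex_of_real \<rho> * cis y"
      using eq by simp
    then show ?thesis
      using 2 assms by (simp only: mult_left_cancel of_real_eq_0_iff) simp
  qed
qed auto

definition angle_in :: "real \<Rightarrow> real \<Rightarrow> real \<Rightarrow> bool" where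
  "angle_in a b s \<longleftrightarrow> (\<exists>k::int. a \<le> s + 24 * of_int k \<and> s + 24 * of_int k \<le> b)"

lemma angle_in_iff:
  assumes "s - 48 < a" "b < s + 48"
  shows "angle_in a b s \<longleftrightarrow>
           (a \<le> s - 24 \<and> s - 24 \<le> b) \<or> (a \<le> s \<and> s \<le> b) \<or> (a \<le> s + 24 \<and> s + 24 \<le> b)"
proof
  assume "angle_in a b s"
  then obtain k :: int where k: "a \<le> s + 24 * of_int k" "s + 24 * of_int k \<le> b"
    unfolding angle_in_def by blast
  have "of_int k < (2::real)" "(-2::real) < of_int k"
    using k assms by linarith+
  then have "k = -1 \<or> k = 0 \<or> k = 1"
    by linarith
  then show "(a \<le> s - 24 \<and> s - 24 \<le> b) \<or> (a \<le> s \<and> s \<le> b) \<or> (a \<le> s + 24 \<and> s + 24 \<le> b)"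
    using k by auto
next
  assume "(a \<le> s - 24 \<and> s - 24 \<le> b) \<or> (a \<le> s \<and> s \<le> b) \<or> (a \<le> s + 24 \<and> s + 24 \<le> b)"
  then obtain k :: int where "k \<in> {-1, 0, 1}" "a \<le> s + 24 * of_int k" "s + 24 * of_int k \<le> b"
    by (elim disjE) (force intro: exI[of _ "-1"], force intro: exI[of _ 0], force intro: exI[of _ 1])
  then show "angle_in a b s"
    unfolding angle_in_def by blast
qed

lemma ray_point_in_arc_iff:
  assumes "0 < \<rho>"
  shows "ray_point r g \<in> arc_points (\<rho>, ang a, ang b) \<longleftrightarrow>
           (r = \<rho> \<and> angle_in a b g) \<or> (r = -\<rho> \<and> angle_in a b (g + 12))"
proof -
  have angle_in: "(\<exists>s. a \<le> s \<and> s \<le> b \<and> cis (ang s) = cis (ang c)) \<longleftrightarrow> angle_in a b c" for c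
    unfolding cis_ang_eq_iff angle_in_def by blast
  have "ray_point r g \<in> arc_points (\<rho>, ang a, ang b) \<longleftrightarrow>
          (\<exists>s. a \<le> s \<and> s \<le> b \<and> complex_of_real r * cis (ang g) = complex_of_real \<rho> * cis (ang s))"
    unfolding arc_points_ang ray_point_def by blast
  then show ?thesis
    unfolding scaled_cis_eq_iff[OF assms] cis_ang_add_half_turn[symmetric] angle_in[symmetric]
    by blast
qed

lemma closed_segment_ray_point:
  "closed_segment (ray_point r1 g) (ray_point r2 g) = (\<lambda>r. ray_point r g) ` closed_segment r1 r2"
proof -
  have "linear (\<lambda>r::real. r *\<^sub>R cis (ang g))"
    by (simp add: bounded_linear.linear bounded_linear_scaleR_left)
  then show ?thesis
    using closed_segment_linear_image[of "\<lambda>r. r *\<^sub>R cis (ang g)" r1 r2]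
    by (simp add: ray_point_def scaleR_conv_of_real)
qed

lemma arc_disjoint_ray_segment_iff:
  assumes "0 < \<rho>"
  shows "arc_points (\<rho>, ang a, ang b) \<inter> closed_segment (ray_point r1 g) (ray_point r2 g) = {} \<longleftrightarrow>
         (\<rho> \<in> closed_segment r1 r2 \<longrightarrow> \<not> angle_in a b g) \<and>
         (-\<rho> \<in> closed_segment r1 r2 \<longrightarrow> \<not> angle_in a b (g + 12))"
proof -
  have "arc_points (\<rho>, ang a, ang b) \<inter> (\<lambda>r. ray_point r g) ` closed_segment r1 r2 = {}
          \<longleftrightarrow> (\<forall>r\<in>closed_segment r1 r2. ray_point r g \<notin> arc_points (\<rho>, ang a, ang b))"
    by blast
  then show ?thesis
    unfolding closed_segment_ray_point ray_point_in_arc_iff[OF assms] by blast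
qed

lemma arc_k_visible_along_ray:
  assumes "r \<noteq> 0" "ray_point r g \<in> arc_points (A u)" "ray_point r' g \<in> arc_points (A v)"
    and "\<forall>w\<in>V. w \<noteq> u \<longrightarrow> w \<noteq> v \<longrightarrow>
           arc_points (A w) \<inter> closed_segment (ray_point r g) (ray_point r' g) = {}"
  shows "arc_k_visible k V A u v"
proof -
  have "collinear {0, ray_point r g, ray_point r' g}"
    unfolding collinear_lemma ray_point_def using assms(1)
    by (intro disjI2 exI[of _ "r' / r"]) (simp add: scaleR_conv_of_real)
  moreover have "other_hits V (\<lambda>w. arc_points (A w)) u v (ray_point r g) (ray_point r' g) = 0"
  proof -
    have "{w \<in> V - {u, v}. arc_points (A w) \<inter> closed_segment (ray_point r g) (ray_point r' g) \<noteq> {}} = {}"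
      using assms(4) by blast
    then show ?thesis
      unfolding other_hits_def by (simp only: card.empty)
  qed
  ultimately show ?thesis
    unfolding arc_k_visible_def using assms(2,3) by fastforce
qed

lemma no_shift_into_gap:
  fixes a1 b1 a2 b2 s p :: real and m :: int
  assumes "a1 \<le> s" "s \<le> b1" "b1 < a2" "b2 < a1 + p"
  shows "\<not> (a2 \<le> s + p * of_int m \<and> s + p * of_int m \<le> b2)"
proof
  assume "a2 \<le> s + p * of_int m \<and> s + p * of_int m \<le> b2"
  then have p: "0 < p" and "0 < p * of_int m" "p * of_int m < p * 1"
    using assms by linarith+
  then have "0 < (of_int m :: real)" "of_int m < (1::real)"
    by (simp_all only: zero_less_mult_iff mult_less_cancel_left_pos[OF p]) linarith
  then have "0 < m" "m < 1"
    by simp_all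
  then show False
    by linarith
qed

lemma not_arc_k_visible_of_angle_gap:
  assumes "A u = (\<rho>, ang a, ang b)" "A v = (\<rho>', ang a', ang b')" "0 < \<rho>" "0 < \<rho>'"
    and "b < a'" "b' < a + 12"
  shows "\<not> arc_k_visible k V A u v"
proof
  assume "arc_k_visible k V A u v"
  then obtain p q where p: "p \<in> arc_points (A u)" and q: "q \<in> arc_points (A v)"
    and "collinear {0, p, q}"
    unfolding arc_k_visible_def by blast
  obtain s where s: "a \<le> s" "s \<le> b" "p = ray_point \<rho> s"
    using p unfolding assms(1) arc_points_ang by blast
  have "p \<noteq> 0" "q \<noteq> 0"
    using p q assms(1-4) by (auto simp: arc_points_def)
  then obtain c where "q = c *\<^sub>R p"
    using \<open>collinear {0, p, q}\<close> unfolding collinear_lemma by blast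
  then have "ray_point (c * \<rho>) s \<in> arc_points (\<rho>', ang a', ang b')"
    using q s(3) assms(2) by (simp add: ray_point_def scaleR_conv_of_real mult.assoc)
  \<comment> \<open>the angles of collinear points differ by a multiple of a half-turn\<close>
  then obtain k :: int where "a' \<le> s + 24 * of_int k \<and> s + 24 * of_int k \<le> b' \<or>
                              a' \<le> s + 12 + 24 * of_int k \<and> s + 12 + 24 * of_int k \<le> b'"
    unfolding ray_point_in_arc_iff[OF assms(4)] angle_in_def by blast
  moreover have "12 * of_int (2 * k) = 24 * (of_int k :: real)" "12 * of_int (2 * k + 1) = 12 + 24 * (of_int k :: real)"
    by simp_all
  ultimately show False
    using no_shift_into_gap[OF s(1,2) assms(5,6), of "2 * k"] no_shift_into_gap[OF s(1,2) assms(5,6), of "2 * k + 1"]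
    by (simp only: add.assoc) blast
qed

lemma arc_points_disjoint_of_radius:
  assumes "\<rho>1 \<noteq> \<rho>2" "0 \<le> \<rho>1" "0 \<le> \<rho>2"
  shows "arc_points (\<rho>1, a1, b1) \<inter> arc_points (\<rho>2, a2, b2) = {}"
proof -
  have "norm z = \<bar>\<rho>\<bar>" if "z \<in> arc_points (\<rho>, a, b)" for z \<rho> a b
    using that by (auto simp: arc_points_def norm_mult)
  then show ?thesis
    using assms by (metis abs_of_nonneg disjoint_iff)
qed

lemma arc_points_disjoint_of_angle_gap:
  assumes "0 < \<rho>" "b1 < a2" "b2 < a1 + 24"
  shows "arc_points (\<rho>, ang a1, ang b1) \<inter> arc_points (\<rho>, ang a2, ang b2) = {}"
proof -
  have "ray_point \<rho> s \<notin> arc_points (\<rho>, ang a2, ang b2)" if "a1 \<le> s" "s \<le> b1" for s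
    unfolding ray_point_in_arc_iff[OF assms(1)] angle_in_def
    using no_shift_into_gap[OF that assms(2,3)] assms(1) by auto
  then show ?thesis
    unfolding arc_points_ang by blast
qed

lemma valid_arc_ang: "0 < \<rho> \<Longrightarrow> a < b \<Longrightarrow> b < a + 24 \<Longrightarrow> valid_arc (\<rho>, ang a, ang b)"
proof -
  assume "0 < \<rho>" "a < b" "b < a + 24"
  moreover have "b * pi < (a + 24) * pi"
    using \<open>b < a + 24\<close> by simp
  ultimately show ?thesis
    by (simp add: valid_arc_def ang_def divide_strict_right_mono field_simps)
qed

lemma arc_k_visible_commute: "arc_k_visible k V A u v \<longleftrightarrow> arc_k_visible k V A v u"
proof -
  have "arc_k_visible k V A v u" if vis: "arc_k_visible k V A u v" for u v
  proof -
    obtain p q where "p \<in> arc_points (A u)" "q \<in> arc_points (A v)" "collinear {0, p, q}"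
      "other_hits V (\<lambda>w. arc_points (A w)) u v p q \<le> k"
      using vis unfolding arc_k_visible_def by blast
    moreover have "collinear {0, q, p} = collinear {0, p, q}"
      by (simp add: insert_commute)
    moreover have "other_hits V S v u q p = other_hits V S u v p q" for S
      unfolding other_hits_def by (simp add: insert_commute closed_segment_commute)
    ultimately show ?thesis
      unfolding arc_k_visible_def by (intro exI[of _ q] exI[of _ p]) auto
  qed
  then show ?thesis
    by blast
qed

lemma pairwise_disjoint_onI:
  assumes "\<And>u v. u \<in> V \<Longrightarrow> v \<in> V \<Longrightarrow> u < v \<Longrightarrow> S u \<inter> S v = {}"
  shows "pairwise_disjoint_on V S"
  unfolding pairwise_disjoint_on_def using assms by (metis Int_commute linorder_neq_iff)

section \<open>Bars\<close>

definition bar_span :: "real \<times> real \<times> real \<Rightarrow> real set" where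
  "bar_span b = {fst b .. fst (snd b)}"

definition bar_height :: "real \<times> real \<times> real \<Rightarrow> real" where
  "bar_height b = snd (snd b)"

lemma is_interval_bar_span: "is_interval (bar_span b)"
  by (simp add: bar_span_def is_interval_cc)

lemma mem_bar_points: "z \<in> bar_points b \<longleftrightarrow> Re z \<in> bar_span b \<and> Im z = bar_height b"
  by (cases b) (auto simp: bar_points_def bar_span_def bar_height_def complex_eq_iff)

lemma bar_meets_vertical_segment_iff:
  "bar_points b \<inter> closed_segment (Complex x y1) (Complex x y2) \<noteq> {} \<longleftrightarrow>
     x \<in> bar_span b \<and> bar_height b \<in> closed_segment y1 y2"
proof
  assume "bar_points b \<inter> closed_segment (Complex x y1) (Complex x y2) \<noteq> {}"
  then show "x \<in> bar_span b \<and> bar_height b \<in> closed_segment y1 y2"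
    by (auto simp: mem_bar_points closed_segment_same_Re)
next
  assume "x \<in> bar_span b \<and> bar_height b \<in> closed_segment y1 y2"
  then have "Complex x (bar_height b) \<in> bar_points b \<inter> closed_segment (Complex x y1) (Complex x y2)"
    by (simp add: mem_bar_points closed_segment_same_Re)
  then show "bar_points b \<inter> closed_segment (Complex x y1) (Complex x y2) \<noteq> {}"
    by blast
qed

definition bar_blockers :: "nat set \<Rightarrow> (nat \<Rightarrow> real \<times> real \<times> real) \<Rightarrow> nat \<Rightarrow> nat \<Rightarrow> real \<Rightarrow> nat set" where
  "bar_blockers V B u v x = {w \<in> V - {u, v}. x \<in> bar_span (B w) \<and>
     bar_height (B w) \<in> closed_segment (bar_height (B u)) (bar_height (B v))}"

lemma bar_k_visible_iff:
  "bar_k_visible k V B u v \<longleftrightarrow>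
     (\<exists>x \<in> bar_span (B u) \<inter> bar_span (B v). card (bar_blockers V B u v x) \<le> k)"
proof -
  have hits: "other_hits V (\<lambda>w. bar_points (B w)) u v
                (Complex x (bar_height (B u))) (Complex x (bar_height (B v))) = card (bar_blockers V B u v x)" for x
    unfolding other_hits_def bar_blockers_def bar_meets_vertical_segment_iff ..
  show ?thesis
  proof
    assume "bar_k_visible k V B u v"
    then obtain p q where "p \<in> bar_points (B u)" "q \<in> bar_points (B v)" "Re p = Re q"
      and hits_pq: "other_hits V (\<lambda>w. bar_points (B w)) u v p q \<le> k"
      unfolding bar_k_visible_def by blast
    moreover define x where "x = Re p"
    ultimately have "x \<in> bar_span (B u) \<inter> bar_span (B v)"
      and "p = Complex x (bar_height (B u))" "q = Complex x (bar_height (B v))"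
      by (simp_all add: mem_bar_points complex_eq_iff)
    moreover have "card (bar_blockers V B u v x) \<le> k"
      using hits_pq unfolding calculation(2,3) hits .
    ultimately show "\<exists>x \<in> bar_span (B u) \<inter> bar_span (B v). card (bar_blockers V B u v x) \<le> k"
      by blast
  next
    assume "\<exists>x \<in> bar_span (B u) \<inter> bar_span (B v). card (bar_blockers V B u v x) \<le> k"
    then obtain x where "x \<in> bar_span (B u)" "x \<in> bar_span (B v)" "card (bar_blockers V B u v x) \<le> k"
      by blast
    then show "bar_k_visible k V B u v"
      unfolding bar_k_visible_def
      by (intro exI[of _ "Complex x (bar_height (B u))"] exI[of _ "Complex x (bar_height (B v))"])
        (simp add: mem_bar_points hits)
  qed
qed

lemma bar_heights_differ:
  assumes "pairwise_disjoint_on V (\<lambda>v. bar_points (B v))" "u \<in> V" "v \<in> V" "u \<noteq> v"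
    and "x \<in> bar_span (B u)" "x \<in> bar_span (B v)"
  shows "bar_height (B u) \<noteq> bar_height (B v)"
proof
  assume "bar_height (B u) = bar_height (B v)"
  then have "Complex x (bar_height (B u)) \<in> bar_points (B u) \<inter> bar_points (B v)"
    using assms(5,6) by (simp add: mem_bar_points)
  then show False
    using assms(1-4) unfolding pairwise_disjoint_on_def by blast
qed

lemma inj_on_bar_height:
  assumes "pairwise_disjoint_on V (\<lambda>v. bar_points (B v))"
    and "\<And>u v. u \<in> V \<Longrightarrow> v \<in> V \<Longrightarrow> u \<noteq> v \<Longrightarrow> bar_k_visible k V B u v"
  shows "inj_on (\<lambda>v. bar_height (B v)) V"
proof (rule inj_onI, rule ccontr)
  fix u v assume "u \<in> V" "v \<in> V" "bar_height (B u) = bar_height (B v)" "u \<noteq> v"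
  moreover obtain x where "x \<in> bar_span (B u)" "x \<in> bar_span (B v)"
    using assms(2)[OF \<open>u \<in> V\<close> \<open>v \<in> V\<close> \<open>u \<noteq> v\<close>] unfolding bar_k_visible_iff by blast
  ultimately show False
    using bar_heights_differ[OF assms(1)] by blast
qed

lemma bar_0_visible_sight:
  assumes "finite V" "bar_k_visible 0 V B u v"
  shows "\<exists>x \<in> bar_span (B u) \<inter> bar_span (B v). \<forall>w \<in> V - {u, v}.
           bar_height (B w) \<in> closed_segment (bar_height (B u)) (bar_height (B v)) \<longrightarrow> x \<notin> bar_span (B w)"
proof -
  obtain x where x: "x \<in> bar_span (B u) \<inter> bar_span (B v)" "card (bar_blockers V B u v x) \<le> 0"
    using assms(2) unfolding bar_k_visible_iff by blast
  moreover have "finite (bar_blockers V B u v x)"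
    using assms(1) by (simp add: bar_blockers_def)
  ultimately have "bar_blockers V B u v x = {}"
    by simp
  with x show ?thesis
    unfolding bar_blockers_def by blast
qed

lemma bar_blockers_of_not_visible:
  assumes "finite V" "\<not> bar_k_visible i V B u v" "1 \<le> i" "V - {u, v} = {a, b}"
    and "x \<in> bar_span (B u)" "x \<in> bar_span (B v)"
  shows "a \<in> bar_blockers V B u v x" "b \<in> bar_blockers V B u v x"
proof -
  have "\<not> card (bar_blockers V B u v x) \<le> i"
    using assms(2,5,6) unfolding bar_k_visible_iff by blast
  then have "2 \<le> card (bar_blockers V B u v x)"
    using assms(3) by linarith
  moreover have "bar_blockers V B u v x \<subseteq> {a, b}"
    using assms(4) unfolding bar_blockers_def by blast
  moreover have "card {a, b} \<le> 2"
    by (simp add: card_insert_if)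
  ultimately have "bar_blockers V B u v x = {a, b}"
    using card_seteq[of "{a, b}" "bar_blockers V B u v x"] by simp
  then show "a \<in> bar_blockers V B u v x" "b \<in> bar_blockers V B u v x"
    by auto
qed

section \<open>Intervals on the real line\<close>

lemma is_interval_betweenI:
  fixes S :: "real set"
  assumes "is_interval S" "a \<in> S" "b \<in> S" "a \<le> x" "x \<le> b"
  shows "x \<in> S"
  using assms unfolding is_interval_1 by blast

lemma is_interval_outside:
  fixes S :: "real set"
  assumes "is_interval S" "a \<in> S" "b \<in> S" "x \<notin> S"
  shows "x < a \<or> b < x"
  using assms unfolding is_interval_1 by (meson not_le)

lemma no_three_intervals_pattern_oriented:
  fixes A B C :: "real set"
  assumes A: "is_interval A" and B: "is_interval B" and C: "is_interval C"
    and "p \<in> A" "p \<in> C" "p \<notin> B" "q \<in> A" "q \<in> B" "r \<in> B" "r \<in> C"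
    and "s \<in> B" "s \<notin> A" "t \<in> B" "t \<notin> C"
    and "u \<in> C" "u \<notin> A" "u \<notin> B" "w \<in> A" "w \<notin> B" "w \<notin> C"
    and "q < p"
  shows False
proof -
  note outside = is_interval_outside
  have "s < p"
    using outside[OF B \<open>q \<in> B\<close> \<open>s \<in> B\<close> \<open>p \<notin> B\<close>] \<open>q < p\<close> by linarith
  have "t < p"
    using outside[OF B \<open>q \<in> B\<close> \<open>t \<in> B\<close> \<open>p \<notin> B\<close>] \<open>q < p\<close> by linarith
  have "r < p"
    using outside[OF B \<open>q \<in> B\<close> \<open>r \<in> B\<close> \<open>p \<notin> B\<close>] \<open>q < p\<close> by linarith
  have "s < q"
    using outside[OF A \<open>q \<in> A\<close> \<open>p \<in> A\<close> \<open>s \<notin> A\<close>] \<open>s < p\<close> by linarith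
  have "t < r"
    using outside[OF C \<open>r \<in> C\<close> \<open>p \<in> C\<close> \<open>t \<notin> C\<close>] \<open>t < p\<close> by linarith
  have "t < u"
    using outside[OF C \<open>u \<in> C\<close> \<open>r \<in> C\<close> \<open>t \<notin> C\<close>] \<open>t < r\<close> by linarith
  have "p < u"
    using outside[OF B \<open>t \<in> B\<close> \<open>q \<in> B\<close> \<open>u \<notin> B\<close>] outside[OF A \<open>q \<in> A\<close> \<open>p \<in> A\<close> \<open>u \<notin> A\<close>]
      \<open>t < u\<close> by linarith
  have "r < w"
    using outside[OF A \<open>w \<in> A\<close> \<open>q \<in> A\<close> \<open>s \<notin> A\<close>] outside[OF B \<open>s \<in> B\<close> \<open>r \<in> B\<close> \<open>w \<notin> B\<close>]
      \<open>s < q\<close> by linarith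
  have "u < w"
    using outside[OF C \<open>r \<in> C\<close> \<open>u \<in> C\<close> \<open>w \<notin> C\<close>] \<open>r < w\<close> by linarith
  then show False
    using outside[OF A \<open>p \<in> A\<close> \<open>w \<in> A\<close> \<open>u \<notin> A\<close>] \<open>p < u\<close> by linarith
qed

lemma no_three_intervals_pattern:
  fixes A B C :: "real set"
  assumes "is_interval A" "is_interval B" "is_interval C"
    and "p \<in> A" "p \<in> C" "p \<notin> B" "q \<in> A" "q \<in> B" "r \<in> B" "r \<in> C"
    and "s \<in> B" "s \<notin> A" "t \<in> B" "t \<notin> C"
    and "u \<in> C" "u \<notin> A" "u \<notin> B" "w \<in> A" "w \<notin> B" "w \<notin> C"
  shows False
proof (cases "q < p")
  case True
  then show False
    using no_three_intervals_pattern_oriented assms by blast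
next
  case False
  \<comment> \<open>the hypotheses are invariant under the reflection \<open>x \<mapsto> - x\<close>\<close>
  have neg: "- x \<in> uminus ` S \<longleftrightarrow> (x :: real) \<in> S" for x S
    by force
  have "q \<noteq> p"
    using assms by blast
  with False have "- q < - p"
    by simp
  then show False
    using no_three_intervals_pattern_oriented[of "uminus ` A" "uminus ` B" "uminus ` C" "- p" "- q" "- r" "- s" "- t" "- u" "- w"]
      assms by (simp only: is_interval_uminusI neg) blast
qed

lemma interval_cycle4_chord_oriented:
  fixes P Q R S :: "real set"
  assumes P: "is_interval P" and Q: "is_interval Q" and R: "is_interval R" and S: "is_interval S"
    and "a \<in> P" "a \<in> Q" "b \<in> Q" "b \<in> R" "c \<in> R" "c \<in> S" "d \<in> S" "d \<in> P"
    and "P \<inter> R = {}" "a < b"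
  shows "Q \<inter> S \<noteq> {}"
proof -
  have "b \<notin> P" "a \<notin> R" "d \<notin> R"
    using assms by blast+
  then have "d < b" "a < c" "d < c"
    using is_interval_outside[OF P \<open>a \<in> P\<close> \<open>d \<in> P\<close> \<open>b \<notin> P\<close>]
      is_interval_outside[OF R \<open>c \<in> R\<close> \<open>b \<in> R\<close> \<open>a \<notin> R\<close>]
      is_interval_outside[OF R \<open>c \<in> R\<close> \<open>b \<in> R\<close> \<open>d \<notin> R\<close>] \<open>a < b\<close> by linarith+
  then have "max a d \<in> Q" "max a d \<in> S"
    using is_interval_betweenI[OF Q \<open>a \<in> Q\<close> \<open>b \<in> Q\<close>] is_interval_betweenI[OF S \<open>d \<in> S\<close> \<open>c \<in> S\<close>]
      \<open>a < b\<close> by simp_all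
  then show ?thesis
    by blast
qed

lemma interval_cycle4_chord:
  fixes P Q R S :: "real set"
  assumes "is_interval P" "is_interval Q" "is_interval R" "is_interval S"
    and "P \<inter> Q \<noteq> {}" "Q \<inter> R \<noteq> {}" "R \<inter> S \<noteq> {}" "S \<inter> P \<noteq> {}" "P \<inter> R = {}"
  shows "Q \<inter> S \<noteq> {}"
proof -
  obtain a b c d where "a \<in> P \<inter> Q" "b \<in> Q \<inter> R" "c \<in> R \<inter> S" "d \<in> S \<inter> P"
    using assms(5-8) by blast
  moreover have "a \<noteq> b"
    using calculation assms(9) by blast
  \<comment> \<open>exchanging \<open>P\<close> and \<open>R\<close> exchanges the roles of \<open>a\<close> and \<open>b\<close>\<close>
  ultimately show ?thesis
    using interval_cycle4_chord_oriented[of P Q R S a b c d]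
      interval_cycle4_chord_oriented[of R Q P S b a d c] assms(1-4,9)
    by (metis IntD1 IntD2 inf_commute linorder_neqE_linordered_idom)
qed

lemma mutually_between_eq:
  fixes a b c d :: real
  assumes "b \<in> closed_segment a c" "d \<in> closed_segment a c" "a \<in> closed_segment b d" "c \<in> closed_segment b d"
  shows "a = b \<or> a = d"
  using assms by (auto simp: closed_segment_eq_real_ivl split: if_splits)

lemma ex_increasing_enumeration:
  fixes h :: "'a \<Rightarrow> 'b::linorder"
  assumes "finite V" "inj_on h V" "n \<le> card V"
  shows "\<exists>e. (\<forall>i < n. e i \<in> V) \<and> (\<forall>i j. i < j \<longrightarrow> j < n \<longrightarrow> h (e i) < h (e j))"
proof -
  define ys where "ys = sorted_list_of_set (h ` V)"
  have "length ys = card V" "set ys = h ` V" "sorted_wrt (<) ys"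
    using assms(1,2) by (simp_all add: ys_def card_image strict_sorted_list_of_set)
  then have mem: "ys ! i \<in> h ` V" if "i < n" for i
    using that assms(3) by (metis nth_mem order_less_le_trans)
  have ys: "ys ! i \<in> h ` V" "h (inv_into V h (ys ! i)) = ys ! i" if "i < n" for i
    using mem[OF that] by (simp_all add: f_inv_into_f)
  have "inv_into V h (ys ! i) \<in> V" if "i < n" for i
    using ys(1)[OF that] by (simp add: inv_into_into)
  moreover have "h (inv_into V h (ys ! i)) < h (inv_into V h (ys ! j))" if "i < j" "j < n" for i j
    using ys(2)[of i] ys(2)[of j] that sorted_wrt_nth_less[OF \<open>sorted_wrt (<) ys\<close>, of i j]
      \<open>length ys = card V\<close> assms(3) by simp
  ultimately show ?thesis
    by (intro exI[of _ "\<lambda>i. inv_into V h (ys ! i)"]) auto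
qed

section \<open>The complete graph on five vertices\<close>

definition complete_graph :: "nat set \<Rightarrow> nat \<Rightarrow> nat \<Rightarrow> bool" where
  "complete_graph V u v \<longleftrightarrow> u \<in> V \<and> v \<in> V \<and> u \<noteq> v"

lemma no_five_intervals_with_mutual_sight:
  fixes I :: "nat \<Rightarrow> real set"
  assumes "\<And>i. is_interval (I i)"
    and sight: "\<And>a b. a < b \<Longrightarrow> b < 5 \<Longrightarrow> \<exists>x \<in> I a \<inter> I b. \<forall>c. a < c \<longrightarrow> c < b \<longrightarrow> x \<notin> I c"
  shows False
proof -
  \<comment> \<open>\<open>I 0\<close> and \<open>I 4\<close> only serve as endpoints of lines of sight past the middle intervals\<close>
  obtain p where "p \<in> I 1" "p \<in> I 3" "p \<notin> I 2"
    using sight[of 1 3] by auto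
  moreover obtain q where "q \<in> I 1" "q \<in> I 2"
    using sight[of 1 2] by auto
  moreover obtain r where "r \<in> I 2" "r \<in> I 3"
    using sight[of 2 3] by auto
  moreover obtain s where "s \<in> I 2" "s \<notin> I 1"
    using sight[of 0 2] by auto
  moreover obtain t where "t \<in> I 2" "t \<notin> I 3"
    using sight[of 2 4] by auto
  moreover obtain u where "u \<in> I 3" "u \<notin> I 1" "u \<notin> I 2"
    using sight[of 0 3] by auto
  moreover obtain w where "w \<in> I 1" "w \<notin> I 2" "w \<notin> I 3"
    using sight[of 1 4] by auto
  ultimately show False
    using no_three_intervals_pattern[of "I 1" "I 2" "I 3" p q r s t u w] assms(1) by blast
qed

lemma complete_graph_not_bar_0_vis_graph:
  assumes "5 \<le> card V"
  shows "\<not> bar_k_vis_graph 0 V (complete_graph V)"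
proof
  assume "bar_k_vis_graph 0 V (complete_graph V)"
  then obtain B where disj: "pairwise_disjoint_on V (\<lambda>v. bar_points (B v))"
    and adj: "\<forall>u v. complete_graph V u v \<longleftrightarrow> u \<in> V \<and> v \<in> V \<and> u \<noteq> v \<and> bar_k_visible 0 V B u v"
    unfolding bar_k_vis_graph_def by blast
  have vis: "bar_k_visible 0 V B u v" if "u \<in> V" "v \<in> V" "u \<noteq> v" for u v
    using adj that unfolding complete_graph_def by blast
  have "finite V"
    using assms card.infinite by force
  define h where "h v = bar_height (B v)" for v
  have "inj_on h V"
    unfolding h_def using inj_on_bar_height[OF disj vis] .
  then obtain e :: "nat \<Rightarrow> nat"
    where e: "\<And>i. i < 5 \<Longrightarrow> e i \<in> V" "\<And>i j. i < j \<Longrightarrow> j < 5 \<Longrightarrow> h (e i) < h (e j)"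
    using ex_increasing_enumeration[OF \<open>finite V\<close> _ assms] by blast
  show False
  proof (rule no_five_intervals_with_mutual_sight[of "\<lambda>i. bar_span (B (e i))"])
    fix a b :: nat
    assume "a < b" "b < 5"
    then have "a < 5" "e a \<noteq> e b"
      using e(2)[of a b] by auto
    then obtain x where x: "x \<in> bar_span (B (e a))" "x \<in> bar_span (B (e b))"
      and clear: "\<And>w. w \<in> V - {e a, e b} \<Longrightarrow> h w \<in> closed_segment (h (e a)) (h (e b)) \<Longrightarrow>
                    x \<notin> bar_span (B w)"
      using bar_0_visible_sight[OF \<open>finite V\<close> vis[OF e(1) e(1)]] \<open>b < 5\<close>
      unfolding h_def by blast
    have "x \<notin> bar_span (B (e c))" if "a < c" "c < b" for c
    proof (rule clear)
      have "h (e a) < h (e c)" "h (e c) < h (e b)"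
        using e(2) that \<open>b < 5\<close> by simp_all
      then show "e c \<in> V - {e a, e b}" "h (e c) \<in> closed_segment (h (e a)) (h (e b))"
        using e(1) that \<open>b < 5\<close> by (auto simp: closed_segment_eq_real_ivl)
    qed
    with x show "\<exists>x \<in> bar_span (B (e a)) \<inter> bar_span (B (e b)).
                   \<forall>c. a < c \<longrightarrow> c < b \<longrightarrow> x \<notin> bar_span (B (e c))"
      by blast
  qed (rule is_interval_bar_span)
qed

lemma lessThan_five: "{..<5::nat} = {0, 1, 2, 3, 4}"
  by auto

lemma lessThan_four: "{..<4::nat} = {0, 1, 2, 3}"
  by auto

lemmas ray_arithmetic = ray_point_in_arc_iff arc_disjoint_ray_segment_iff angle_in_iff
  closed_segment_eq_real_ivl lessThan_five lessThan_four

definition K5_arcs :: "nat \<Rightarrow> real \<times> real \<times> real" where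
  "K5_arcs w =
     (if w = 0 then (2, ang 6, ang 20) else if w = 1 then (1, ang 4, ang 8)
      else if w = 2 then (1, ang 10, ang 18) else if w = 3 then (1, ang 19, ang 26)
      else (4, ang 12, ang 32))"

lemma K5_arcs_visible:
  assumes "u < 5" "v < 5" "u \<noteq> v"
  shows "arc_k_visible k {..<5} K5_arcs u v"
proof -
  have vis:
    "arc_k_visible k {..<5} K5_arcs 0 1" "arc_k_visible k {..<5} K5_arcs 0 2"
    "arc_k_visible k {..<5} K5_arcs 0 3" "arc_k_visible k {..<5} K5_arcs 0 4"
    "arc_k_visible k {..<5} K5_arcs 1 2" "arc_k_visible k {..<5} K5_arcs 1 3"
    "arc_k_visible k {..<5} K5_arcs 1 4" "arc_k_visible k {..<5} K5_arcs 2 3"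
    "arc_k_visible k {..<5} K5_arcs 2 4" "arc_k_visible k {..<5} K5_arcs 3 4"
  proof -
    show "arc_k_visible k {..<5} K5_arcs 0 1"
      by (rule arc_k_visible_along_ray[where r = 2 and r' = 1 and g = 7])
        (simp_all add: K5_arcs_def ray_arithmetic)
    show "arc_k_visible k {..<5} K5_arcs 0 2"
      by (rule arc_k_visible_along_ray[where r = 2 and r' = 1 and g = 11])
        (simp_all add: K5_arcs_def ray_arithmetic)
    show "arc_k_visible k {..<5} K5_arcs 0 3"
      by (rule arc_k_visible_along_ray[where r = 2 and r' = "-1" and g = 9])
        (simp_all add: K5_arcs_def ray_arithmetic)
    show "arc_k_visible k {..<5} K5_arcs 0 4"
      by (rule arc_k_visible_along_ray[where r = 2 and r' = 4 and g = 7])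
        (simp_all add: K5_arcs_def ray_arithmetic)
    show "arc_k_visible k {..<5} K5_arcs 1 2"
      by (rule arc_k_visible_along_ray[where r = 1 and r' = "-1" and g = 5])
        (simp_all add: K5_arcs_def ray_arithmetic)
    show "arc_k_visible k {..<5} K5_arcs 1 3"
      by (rule arc_k_visible_along_ray[where r = 1 and r' = "-1" and g = "15 / 2"])
        (simp_all add: K5_arcs_def ray_arithmetic)
    show "arc_k_visible k {..<5} K5_arcs 1 4"
      by (rule arc_k_visible_along_ray[where r = 1 and r' = 4 and g = 5])
        (simp_all add: K5_arcs_def ray_arithmetic)
    show "arc_k_visible k {..<5} K5_arcs 2 3"
      by (rule arc_k_visible_along_ray[where r = 1 and r' = "-1" and g = 11])
        (simp_all add: K5_arcs_def ray_arithmetic)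
    show "arc_k_visible k {..<5} K5_arcs 2 4"
      by (rule arc_k_visible_along_ray[where r = 1 and r' = "-4" and g = 15])
        (simp_all add: K5_arcs_def ray_arithmetic)
    show "arc_k_visible k {..<5} K5_arcs 3 4"
      by (rule arc_k_visible_along_ray[where r = 1 and r' = 4 and g = 25])
        (simp_all add: K5_arcs_def ray_arithmetic)
  qed
  from assms(1,2) have "u = 0 \<or> u = 1 \<or> u = 2 \<or> u = 3 \<or> u = 4" "v = 0 \<or> v = 1 \<or> v = 2 \<or> v = 3 \<or> v = 4"
    by auto
  then show ?thesis
    using assms(3) vis vis[THEN arc_k_visible_commute[THEN iffD1]] by (elim disjE) simp_all
qed

lemma K5_arc_graph: "arc_k_vis_graph k {..<5} (complete_graph {..<5})"
proof -
  have "pairwise_disjoint_on {..<5} (\<lambda>v. arc_points (K5_arcs v))"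
    by (rule pairwise_disjoint_onI)
      (auto simp: lessThan_five K5_arcs_def arc_points_disjoint_of_radius arc_points_disjoint_of_angle_gap)
  moreover have "\<forall>v\<in>{..<5}. valid_arc (K5_arcs v)"
    by (simp add: lessThan_five K5_arcs_def valid_arc_ang)
  ultimately show ?thesis
    unfolding arc_k_vis_graph_def complete_graph_def using K5_arcs_visible by blast
qed

section \<open>The 4-cycle\<close>

definition cycle4 :: "nat \<Rightarrow> nat \<Rightarrow> bool" where
  "cycle4 u v \<longleftrightarrow> u < 4 \<and> v < 4 \<and> odd (u + v)"

lemma no_interval_cycle4_with_blocking:
  fixes I :: "nat \<Rightarrow> real set" and y :: "nat \<Rightarrow> real"
  assumes "\<And>w. is_interval (I w)"
    and "I 0 \<inter> I 1 \<noteq> {}" "I 1 \<inter> I 2 \<noteq> {}" "I 2 \<inter> I 3 \<noteq> {}" "I 3 \<inter> I 0 \<noteq> {}"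
    and blocked02: "\<And>x. x \<in> I 0 \<Longrightarrow> x \<in> I 2 \<Longrightarrow>
      x \<in> I 1 \<and> x \<in> I 3 \<and> y 1 \<in> closed_segment (y 0) (y 2) \<and> y 3 \<in> closed_segment (y 0) (y 2)"
    and blocked13: "\<And>x. x \<in> I 1 \<Longrightarrow> x \<in> I 3 \<Longrightarrow>
      x \<in> I 0 \<and> x \<in> I 2 \<and> y 0 \<in> closed_segment (y 1) (y 3) \<and> y 2 \<in> closed_segment (y 1) (y 3)"
    and heights: "\<And>x w. w \<in> {1, 3} \<Longrightarrow> x \<in> I 0 \<Longrightarrow> x \<in> I w \<Longrightarrow> y 0 \<noteq> y w"
  shows False
proof -
  have "I 0 \<inter> I 2 = {}"
  proof (rule ccontr)
    assume "I 0 \<inter> I 2 \<noteq> {}"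
    then obtain x where "x \<in> I 0" "x \<in> I 2"
      by blast
    with blocked02 blocked13 have "x \<in> I 1" "x \<in> I 3" "y 0 = y 1 \<or> y 0 = y 3"
      using mutually_between_eq by blast+
    with heights \<open>x \<in> I 0\<close> show False
      by blast
  qed
  moreover have "I 1 \<inter> I 3 = {}"
    using blocked13 calculation by blast
  ultimately show False
    using interval_cycle4_chord[of "I 0" "I 1" "I 2" "I 3"] assms(1-5) by blast
qed

lemma cycle4_not_bar_vis_graph:
  assumes "1 \<le> i"
  shows "\<not> bar_k_vis_graph i {..<4} cycle4"
proof
  assume "bar_k_vis_graph i {..<4} cycle4"
  then obtain B where disj: "pairwise_disjoint_on {..<4} (\<lambda>v. bar_points (B v))"
    and adj: "\<forall>u v. cycle4 u v \<longleftrightarrow> u \<in> {..<4} \<and> v \<in> {..<4} \<and> u \<noteq> v \<and> bar_k_visible i {..<4} B u v"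
    unfolding bar_k_vis_graph_def by blast
  define I where "I w = bar_span (B w)" for w
  define y where "y w = bar_height (B w)" for w
  have meet: "I u \<inter> I v \<noteq> {}" if "cycle4 u v" for u v
    using adj that unfolding I_def bar_k_visible_iff by blast
  have blocked: "x \<in> I a \<and> x \<in> I b \<and> y a \<in> closed_segment (y u) (y v) \<and> y b \<in> closed_segment (y u) (y v)"
    if "\<not> cycle4 u v" "u < 4" "v < 4" "u \<noteq> v" "{..<4} - {u, v} = {a, b}" "x \<in> I u" "x \<in> I v"
    for u v a b x
  proof -
    have "\<not> bar_k_visible i {..<4} B u v"
      using adj that(1-4) by auto
    from bar_blockers_of_not_visible[OF _ this assms that(5)] that(6,7)
    show ?thesis
      unfolding bar_blockers_def I_def y_def by auto
  qed
  have "{..<4::nat} - {0, 2} = {1, 3}" "{..<4::nat} - {1, 3} = {0, 2}"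
    by auto
  show False
  proof (rule no_interval_cycle4_with_blocking[of I y])
    show "x \<in> I 1 \<and> x \<in> I 3 \<and> y 1 \<in> closed_segment (y 0) (y 2) \<and> y 3 \<in> closed_segment (y 0) (y 2)"
      if "x \<in> I 0" "x \<in> I 2" for x
      using blocked[of 0 2 1 3] \<open>{..<4} - {0, 2} = {1, 3}\<close> that by (simp add: cycle4_def)
    show "x \<in> I 0 \<and> x \<in> I 2 \<and> y 0 \<in> closed_segment (y 1) (y 3) \<and> y 2 \<in> closed_segment (y 1) (y 3)"
      if "x \<in> I 1" "x \<in> I 3" for x
      using blocked[of 1 3 0 2] \<open>{..<4} - {1, 3} = {0, 2}\<close> that by (simp add: cycle4_def)
    show "y 0 \<noteq> y w" if "w \<in> {1, 3}" "x \<in> I 0" "x \<in> I w" for x w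
      using bar_heights_differ[OF disj, of 0 w x] that unfolding I_def y_def by auto
  qed (use meet in \<open>auto simp: I_def is_interval_bar_span cycle4_def\<close>)
qed

definition C4_arcs :: "nat \<Rightarrow> real \<times> real \<times> real" where
  "C4_arcs w =
     (if w = 0 then (1, ang 1, ang 5) else if w = 1 then (2, ang 4, ang 8)
      else if w = 2 then (3, ang 7, ang 10) else (4, ang 9, ang 15))"

lemma C4_arcs_visible_iff:
  assumes "u < 4" "v < 4" "u \<noteq> v"
  shows "arc_k_visible k {..<4} C4_arcs u v \<longleftrightarrow> odd (u + v)"
proof -
  have vis:
    "arc_k_visible k {..<4} C4_arcs 0 1" "arc_k_visible k {..<4} C4_arcs 1 2"
    "arc_k_visible k {..<4} C4_arcs 2 3" "arc_k_visible k {..<4} C4_arcs 0 3"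
  proof -
    show "arc_k_visible k {..<4} C4_arcs 0 1"
      by (rule arc_k_visible_along_ray[where r = 1 and r' = 2 and g = "9 / 2"])
        (simp_all add: C4_arcs_def ray_arithmetic)
    show "arc_k_visible k {..<4} C4_arcs 1 2"
      by (rule arc_k_visible_along_ray[where r = 2 and r' = 3 and g = "15 / 2"])
        (simp_all add: C4_arcs_def ray_arithmetic)
    show "arc_k_visible k {..<4} C4_arcs 2 3"
      by (rule arc_k_visible_along_ray[where r = 3 and r' = 4 and g = "19 / 2"])
        (simp_all add: C4_arcs_def ray_arithmetic)
    show "arc_k_visible k {..<4} C4_arcs 0 3"
      by (rule arc_k_visible_along_ray[where r = 1 and r' = "-4" and g = 2])
        (simp_all add: C4_arcs_def ray_arithmetic)
  qed
  have invis: "\<not> arc_k_visible k {..<4} C4_arcs 0 2" "\<not> arc_k_visible k {..<4} C4_arcs 1 3"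
  proof -
    show "\<not> arc_k_visible k {..<4} C4_arcs 0 2"
      by (rule not_arc_k_visible_of_angle_gap[where \<rho> = 1 and a = 1 and b = 5 and \<rho>' = 3 and a' = 7 and b' = 10])
        (simp_all add: C4_arcs_def)
    show "\<not> arc_k_visible k {..<4} C4_arcs 1 3"
      by (rule not_arc_k_visible_of_angle_gap[where \<rho> = 2 and a = 4 and b = 8 and \<rho>' = 4 and a' = 9 and b' = 15])
        (simp_all add: C4_arcs_def)
  qed
  from assms(1,2) have "u = 0 \<or> u = 1 \<or> u = 2 \<or> u = 3" "v = 0 \<or> v = 1 \<or> v = 2 \<or> v = 3"
    by auto
  then show ?thesis
    using assms(3) vis invis vis[THEN arc_k_visible_commute[THEN iffD1]]
      invis[unfolded arc_k_visible_commute[of k _ _ 0] arc_k_visible_commute[of k _ _ 1]]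
    by (elim disjE) simp_all
qed

lemma C4_arc_graph: "arc_k_vis_graph k {..<4} cycle4"
proof -
  have "pairwise_disjoint_on {..<4} (\<lambda>v. arc_points (C4_arcs v))"
    by (rule pairwise_disjoint_onI)
      (auto simp: lessThan_four C4_arcs_def arc_points_disjoint_of_radius)
  moreover have "\<forall>v\<in>{..<4}. valid_arc (C4_arcs v)"
    by (simp add: lessThan_four C4_arcs_def valid_arc_ang)
  ultimately show ?thesis
    unfolding arc_k_vis_graph_def cycle4_def using C4_arcs_visible_iff
    by (intro conjI exI[of _ C4_arcs]) auto
qed

theorem mainTheorem14:
  fixes i j :: nat
  shows "\<exists>(V :: nat set) (E :: nat \<Rightarrow> nat \<Rightarrow> bool).
           arc_k_vis_graph j V E \<and> \<not> bar_k_vis_graph i V E"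
proof (cases "i = 0")
  case True
  then have "\<not> bar_k_vis_graph i {..<5} (complete_graph {..<5})"
    using complete_graph_not_bar_0_vis_graph[of "{..<5}"] by simp
  then show ?thesis
    using K5_arc_graph by blast
next
  case False
  then have "\<not> bar_k_vis_graph i {..<4} cycle4"
    using cycle4_not_bar_vis_graph by simp
  then show ?thesis
    using C4_arc_graph by blast
qed

end
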